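(* Let $(X,L_1,\dots,L_n)$ have any joint distribution with $X$ finitely supported, $L_i\in\{0,1\}$, and $\Pr(L_i=0\mid X=x)>0$ for all $i$ and all $x$ in the support of $X$. Let $\pi$ be a collaborating cryptogenography protocol and $T$ its full transcript. Then \[ I(X;T)\le\sum_{i=1}^n\bigl(\mathrm{susp}_i(X,T)-\mathrm{susp}_i(X)\bigr). \]
   Context: All logarithms are base $2$. Collaborating cryptogenography protocol: there are $n$ players $\mathrm{plr}_1,\dots,\mathrm{plr}_n$; a secret $X$ (finitely supported) and indicators $L_1,\dots,L_n\in\{0,1\}$ ($L_i=1$ means $\mathrm{plr}_i$ knows $X$) have a joint distribution. A protocol $\pi$ specifies, for every possible partial transcript $t^k=(t_1,\dots,t_k)$ (the tuple of the first $k$ messages): whether communication stops; if not, which player $\mathrm{plr}_i$ sends the next message; and probability distributions $p_?$ and $(p_x)_{x}$ on a finite message set (depending on $t^k$). $\mathrm{plr}_i$ draws the next message, with fresh independent randomness, from $p_?$ if $L_i=0$ and from $p_x$ if $L_i=1$ and $X=x$. There is a number $\mathrm{length}(\pi)$ such that the protocol always stops after at most that many messages. $T$ denotes the random full transcript. Suspicion of player $i$: for a random variable $Y$ (possibly a tuple) and $y$ with $\Pr(Y=y)>0$, $\mathrm{susp}_i(Y=y)=-\log\Pr(L_i=0\mid Y=y)\in[0,\infty]$ and $\mathrm{susp}_i(Y)=\sum_y\Pr(Y=y)\mathrm{susp}_i(Y=y)$. *)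

theory Defs
  imports "HOL-Probability.Probability"
begin

text \<open>Players are indexed 0..n-1; the knowledge vector (L_1,...,L_n) is a bool list of
length n, where True means "knows X" (L_i = 1).\<close>

text \<open>A protocol: for each partial transcript, None = stop, or Some (i, p_?, p_x)
= player i sends the next message drawn from p_? (if ignorant) or p_x (if knows X = x).\<close>
type_synonym ('x, 'm) protocol = "'m list \<Rightarrow> (nat \<times> 'm pmf \<times> ('x \<Rightarrow> 'm pmf)) option"

primrec run_protocol ::
  "('x, 'm) protocol \<Rightarrow> nat \<Rightarrow> 'x \<Rightarrow> bool list \<Rightarrow> 'm list \<Rightarrow> 'm list pmf" where
  "run_protocol prot 0 x l t = return_pmf t"
| "run_protocol prot (Suc k) x l t =
     (case prot t of
        None \<Rightarrow> return_pmf t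
      | Some (i, p0, px) \<Rightarrow>
          bind_pmf (if l ! i then px x else p0) (\<lambda>m. run_protocol prot k x l (t @ [m])))"

definition joint_dist ::
  "('x \<times> bool list) pmf \<Rightarrow> ('x, 'm) protocol \<Rightarrow> nat \<Rightarrow> ('x \<times> bool list \<times> 'm list) pmf" where
  "joint_dist \<mu> prot N =
     bind_pmf \<mu> (\<lambda>(x, l). map_pmf (\<lambda>t. (x, l, t)) (run_protocol prot N x l []))"

definition mutual_info :: "('a \<times> 'b) pmf \<Rightarrow> real" where
  "mutual_info p = (\<Sum>(a, b) \<in> set_pmf p.
      pmf p (a, b) * log 2 (pmf p (a, b) / (pmf (map_pmf fst p) a * pmf (map_pmf snd p) b)))"

definition neglog :: "real \<Rightarrow> ereal" where
  "neglog q = (if q = 0 then \<infinity> else ereal (- log 2 q))"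

definition cond_ignorant :: "('y \<times> bool list) pmf \<Rightarrow> nat \<Rightarrow> 'y \<Rightarrow> real" where
  "cond_ignorant J i y =
     measure_pmf.prob J {(y', l). y' = y \<and> \<not> l ! i} / measure_pmf.prob J {(y', l). y' = y}"

definition susp :: "('y \<times> bool list) pmf \<Rightarrow> nat \<Rightarrow> ereal" where
  "susp J i = (\<Sum>y \<in> fst ` set_pmf J.
      ereal (pmf (map_pmf fst J) y) * neglog (cond_ignorant J i y))"

end

theory Submission
  imports Defs
begin

text \<open>
  Consider first a single round in which player \<open>i\<close> sends a message \<open>M\<close>. If \<open>L\<^sub>i = 0\<close> the
  message is drawn from a fixed distribution \<open>q\<^sub>0\<close>, independent of \<open>X\<close>; this makes
  \<open>susp\<^sub>i(X,M) - susp\<^sub>i(X) - I(X;M)\<close> equal to the relative entropy of the law of \<open>M\<close> with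
  respect to \<open>q\<^sub>0\<close>, hence non-negative. For every other player \<open>j\<close> the increase
  \<open>susp\<^sub>j(X,M) - susp\<^sub>j(X)\<close> is non-negative by the log-sum inequality.

  A protocol is a tree of such rounds. Measuring all quantities with unnormalised weights on
  \<open>(X, L, T)\<close>, the slack \<open>\<Sum>\<^sub>i (susp\<^sub>i(X,T) - susp\<^sub>i(X)) - I(X;T)\<close> obeys a chain rule: it is the
  slack of the first round plus the sum of the slacks of the subtrees, one for each first message.
  Induction on the length of the protocol gives non-negativity. If \<open>Pr(L\<^sub>i = 0 | X, T)\<close> vanishes
  with positive probability, the right-hand side is infinite and there is nothing to prove.
\<close>

text \<open>
  A weight \<open>w x l t\<close> stands for \<open>Pr(X = x, L = l, T = t)\<close>, not necessarily normalised, on finite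
  carriers \<open>Xs\<close>, \<open>Ls\<close>, \<open>Ts\<close>; \<open>ignorant_part j w\<close> restricts it to \<open>L\<^sub>j = 0\<close>. Then \<open>susp_XT\<close>,
  \<open>susp_X\<close> and \<open>info_XT\<close> are the total weight times \<open>susp\<^sub>j(X,T)\<close>, \<open>susp\<^sub>j(X)\<close> and \<open>I(X;T)\<close>.
\<close>

definition ignorant_part ::
    "nat \<Rightarrow> ('x \<Rightarrow> bool list \<Rightarrow> 't \<Rightarrow> real) \<Rightarrow> 'x \<Rightarrow> bool list \<Rightarrow> 't \<Rightarrow> real" where
  "ignorant_part j w x l t = (if l ! j then 0 else w x l t)"

definition weight_XT :: "('x \<Rightarrow> bool list \<Rightarrow> 't \<Rightarrow> real) \<Rightarrow> bool list set \<Rightarrow> 'x \<Rightarrow> 't \<Rightarrow> real" where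
  "weight_XT w Ls x t = (\<Sum>l\<in>Ls. w x l t)"

definition weight_X ::
    "('x \<Rightarrow> bool list \<Rightarrow> 't \<Rightarrow> real) \<Rightarrow> bool list set \<Rightarrow> 't set \<Rightarrow> 'x \<Rightarrow> real" where
  "weight_X w Ls Ts x = (\<Sum>t\<in>Ts. weight_XT w Ls x t)"

definition weight_T ::
    "('x \<Rightarrow> bool list \<Rightarrow> 't \<Rightarrow> real) \<Rightarrow> 'x set \<Rightarrow> bool list set \<Rightarrow> 't \<Rightarrow> real" where
  "weight_T w Xs Ls t = (\<Sum>x\<in>Xs. weight_XT w Ls x t)"

definition weight_total ::
    "('x \<Rightarrow> bool list \<Rightarrow> 't \<Rightarrow> real) \<Rightarrow> 'x set \<Rightarrow> bool list set \<Rightarrow> 't set \<Rightarrow> real" where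
  "weight_total w Xs Ls Ts = (\<Sum>x\<in>Xs. weight_X w Ls Ts x)"

definition susp_XT ::
    "('x \<Rightarrow> bool list \<Rightarrow> 't \<Rightarrow> real) \<Rightarrow> 'x set \<Rightarrow> bool list set \<Rightarrow> 't set \<Rightarrow> nat \<Rightarrow> real" where
  "susp_XT w Xs Ls Ts j = (\<Sum>x\<in>Xs. \<Sum>t\<in>Ts.
      weight_XT w Ls x t * log 2 (weight_XT w Ls x t / weight_XT (ignorant_part j w) Ls x t))"

definition susp_X ::
    "('x \<Rightarrow> bool list \<Rightarrow> 't \<Rightarrow> real) \<Rightarrow> 'x set \<Rightarrow> bool list set \<Rightarrow> 't set \<Rightarrow> nat \<Rightarrow> real" where
  "susp_X w Xs Ls Ts j = (\<Sum>x\<in>Xs.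
      weight_X w Ls Ts x * log 2 (weight_X w Ls Ts x / weight_X (ignorant_part j w) Ls Ts x))"

definition info_XT ::
    "('x \<Rightarrow> bool list \<Rightarrow> 't \<Rightarrow> real) \<Rightarrow> 'x set \<Rightarrow> bool list set \<Rightarrow> 't set \<Rightarrow> real" where
  "info_XT w Xs Ls Ts = (\<Sum>x\<in>Xs. \<Sum>t\<in>Ts. weight_XT w Ls x t *
      log 2 (weight_XT w Ls x t * weight_total w Xs Ls Ts / (weight_X w Ls Ts x * weight_T w Xs Ls t)))"

definition leakage_slack ::
    "nat \<Rightarrow> ('x \<Rightarrow> bool list \<Rightarrow> 't \<Rightarrow> real) \<Rightarrow> 'x set \<Rightarrow> bool list set \<Rightarrow> 't set \<Rightarrow> real" where
  "leakage_slack n w Xs Ls Ts =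
     (\<Sum>j<n. susp_XT w Xs Ls Ts j - susp_X w Xs Ls Ts j) - info_XT w Xs Ls Ts"

definition ignorance_supported ::
    "nat \<Rightarrow> ('x \<Rightarrow> bool list \<Rightarrow> 't \<Rightarrow> real) \<Rightarrow> 'x set \<Rightarrow> bool list set \<Rightarrow> 't set \<Rightarrow> bool" where
  "ignorance_supported n w Xs Ls Ts \<longleftrightarrow> (\<forall>x\<in>Xs. \<forall>t\<in>Ts. \<forall>j<n.
      0 < weight_XT w Ls x t \<longrightarrow> 0 < weight_XT (ignorant_part j w) Ls x t)"

lemma ignorant_part_nonneg: "0 \<le> w x l t \<Longrightarrow> 0 \<le> ignorant_part j w x l t"
  by (simp add: ignorant_part_def)

lemma ignorant_part_as_if: "ignorant_part j w x l t = (if \<not> l ! j then w x l t else 0)"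
  by (simp add: ignorant_part_def)

lemma weight_XT_nonneg: "(\<And>x l t. 0 \<le> w x l t) \<Longrightarrow> 0 \<le> weight_XT w Ls x t"
  by (simp add: weight_XT_def sum_nonneg)

lemma weight_XT_ignorant_part_nonneg:
  "(\<And>x l t. 0 \<le> w x l t) \<Longrightarrow> 0 \<le> weight_XT (ignorant_part j w) Ls x t"
  by (simp add: weight_XT_nonneg ignorant_part_nonneg)

lemma weight_X_ignorant_part_le:
  "(\<And>x l t. 0 \<le> w x l t) \<Longrightarrow> weight_X (ignorant_part j w) Ls Ts x \<le> weight_X w Ls Ts x"
  unfolding weight_X_def weight_XT_def ignorant_part_def by (intro sum_mono) auto

lemma weight_X_nonneg: "(\<And>x l t. 0 \<le> w x l t) \<Longrightarrow> 0 \<le> weight_X w Ls Ts x"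
  by (simp add: weight_X_def sum_nonneg weight_XT_nonneg)

lemma weight_T_nonneg: "(\<And>x l t. 0 \<le> w x l t) \<Longrightarrow> 0 \<le> weight_T w Xs Ls t"
  by (simp add: weight_T_def sum_nonneg weight_XT_nonneg)

lemma weight_total_eq_sum_weight_T: "weight_total w Xs Ls Ts = (\<Sum>t\<in>Ts. weight_T w Xs Ls t)"
  unfolding weight_total_def weight_X_def weight_T_def by (rule sum.swap)

lemma weight_XT_le_weight_X:
  "finite Ts \<Longrightarrow> t \<in> Ts \<Longrightarrow> (\<And>x l t. 0 \<le> w x l t) \<Longrightarrow> weight_XT w Ls x t \<le> weight_X w Ls Ts x"
  unfolding weight_X_def by (rule member_le_sum) (auto intro: weight_XT_nonneg)

lemma weight_XT_le_weight_T:
  "finite Xs \<Longrightarrow> x \<in> Xs \<Longrightarrow> (\<And>x l t. 0 \<le> w x l t) \<Longrightarrow> weight_XT w Ls x t \<le> weight_T w Xs Ls t"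
  unfolding weight_T_def by (rule member_le_sum) (auto intro: weight_XT_nonneg)

lemma weight_X_le_weight_total:
  "finite Xs \<Longrightarrow> x \<in> Xs \<Longrightarrow> (\<And>x l t. 0 \<le> w x l t) \<Longrightarrow> weight_X w Ls Ts x \<le> weight_total w Xs Ls Ts"
  unfolding weight_total_def by (rule member_le_sum) (auto intro: weight_X_nonneg)

lemma log_sum_inequality_term:
  fixes a b A B :: real
  assumes "0 \<le> a" "0 \<le> b" "0 < a \<Longrightarrow> 0 < b" "0 < A" "0 < B"
  shows "a * log 2 (A / B) - (b * A / B - a) / ln 2 \<le> a * log 2 (a / b)"
proof (cases "a = 0")
  case True
  then show ?thesis using assms by simp
next
  case False
  then have a: "0 < a" and b: "0 < b" using assms by auto
  define z where "z = b * A / (a * B)"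
  have "0 < z" unfolding z_def using a b assms by simp
  then have "ln z \<le> z - 1" by (rule ln_le_minus_one)
  moreover have "ln z = ln b + ln A - ln a - ln B"
    unfolding z_def using a b assms by (simp add: ln_div ln_mult)
  ultimately have "a * (1 - z) \<le> a * (ln a + ln B - ln b - ln A)"
    using a by (intro mult_left_mono) auto
  moreover have "a * (1 - z) = a - b * A / B" unfolding z_def using a assms by (simp add: field_simps)
  ultimately have "a - b * A / B \<le> a * (ln a - ln b) - a * (ln A - ln B)" by (simp add: algebra_simps)
  then have "(a - b * A / B) / ln 2 \<le> (a * (ln a - ln b) - a * (ln A - ln B)) / ln 2"
    by (simp add: divide_right_mono)
  also have "\<dots> = a * log 2 (a / b) - a * log 2 (A / B)"
    using a b assms by (simp add: log_def ln_div field_simps)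
  finally show ?thesis by (simp add: field_simps)
qed

lemma log_sum_inequality:
  fixes a b :: "'k \<Rightarrow> real"
  assumes "finite K" and a_nonneg: "\<And>k. k \<in> K \<Longrightarrow> 0 \<le> a k" and b_nonneg: "\<And>k. k \<in> K \<Longrightarrow> 0 \<le> b k"
    and support: "\<And>k. k \<in> K \<Longrightarrow> 0 < a k \<Longrightarrow> 0 < b k"
  shows "sum a K * log 2 (sum a K / sum b K) \<le> (\<Sum>k\<in>K. a k * log 2 (a k / b k))"
proof (cases "\<exists>k\<in>K. 0 < a k")
  case False
  then have "\<forall>k\<in>K. a k = 0" using a_nonneg by force
  then show ?thesis by simp
next
  case True
  then obtain k where k: "k \<in> K" "0 < a k" by blast
  have A: "0 < sum a K"
    using k member_le_sum[of k K a] assms by (simp add: order_less_le_trans)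
  have "b k \<le> sum b K"
    using k assms by (intro member_le_sum) auto
  then have B: "0 < sum b K"
    using support[OF k] by linarith
  have "(\<Sum>k\<in>K. a k * log 2 (sum a K / sum b K) - (b k * sum a K / sum b K - a k) / ln 2)
      \<le> (\<Sum>k\<in>K. a k * log 2 (a k / b k))"
    using A B by (intro sum_mono log_sum_inequality_term a_nonneg b_nonneg support)
  moreover have "(\<Sum>k\<in>K. a k * log 2 (sum a K / sum b K) - (b k * sum a K / sum b K - a k) / ln 2)
      = sum a K * log 2 (sum a K / sum b K)"
    using B by (simp add: sum_subtractf sum_distrib_right[symmetric] sum_divide_distrib[symmetric])
  ultimately show ?thesis by simp
qed

lemma gibbs_inequality:
  fixes a q :: "'k \<Rightarrow> real"
  assumes "finite K" and a_nonneg: "\<And>k. k \<in> K \<Longrightarrow> 0 \<le> a k" and q_nonneg: "\<And>k. 0 \<le> q k"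
    and "sum q K = 1" and support: "\<And>k. k \<in> K \<Longrightarrow> 0 < a k \<Longrightarrow> 0 < q k"
  shows "0 \<le> (\<Sum>k\<in>K. a k * log 2 (a k / (sum a K * q k)))"
proof -
  have "0 < sum a K" if "k \<in> K" "0 < a k" for k
    using that member_le_sum[of k K a] assms(1) a_nonneg by (simp add: order_less_le_trans)
  then have "sum a K * log 2 (sum a K / (\<Sum>k\<in>K. sum a K * q k))
      \<le> (\<Sum>k\<in>K. a k * log 2 (a k / (sum a K * q k)))"
    using assms sum_nonneg[of K a] by (intro log_sum_inequality) auto
  moreover have "sum a K * log 2 (sum a K / (\<Sum>k\<in>K. sum a K * q k)) = 0"
    by (cases "sum a K = 0") (simp_all add: sum_distrib_left[symmetric] \<open>sum q K = 1\<close>)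
  ultimately show ?thesis by simp
qed

lemma susp_X_le_susp_XT:
  assumes "finite Ts" and nonneg: "\<And>x l t. 0 \<le> w x l t"
    and "ignorance_supported n w Xs Ls Ts" "j < n"
  shows "susp_X w Xs Ls Ts j \<le> susp_XT w Xs Ls Ts j"
  unfolding susp_X_def susp_XT_def weight_X_def
  using assms by (intro sum_mono log_sum_inequality)
    (auto simp: ignorance_supported_def intro: weight_XT_nonneg weight_XT_ignorant_part_nonneg)

text \<open>
  With \<open>g t\<close> the first message of a transcript \<open>t\<close>, \<open>fibre_weight g m w\<close> is the subtree of
  transcripts starting with \<open>m\<close>, and \<open>image_weight g Ts w\<close> the first round alone.
\<close>

definition fibre_weight ::
    "('t \<Rightarrow> 'm) \<Rightarrow> 'm \<Rightarrow> ('x \<Rightarrow> bool list \<Rightarrow> 't \<Rightarrow> real) \<Rightarrow> 'x \<Rightarrow> bool list \<Rightarrow> 't \<Rightarrow> real" where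
  "fibre_weight g m w x l t = (if g t = m then w x l t else 0)"

definition image_weight ::
    "('t \<Rightarrow> 'm) \<Rightarrow> 't set \<Rightarrow> ('x \<Rightarrow> bool list \<Rightarrow> 't \<Rightarrow> real) \<Rightarrow> 'x \<Rightarrow> bool list \<Rightarrow> 'm \<Rightarrow> real" where
  "image_weight g Ts w x l m = (\<Sum>t\<in>Ts. fibre_weight g m w x l t)"

lemma fibre_weight_nonneg: "0 \<le> w x l t \<Longrightarrow> 0 \<le> fibre_weight g m w x l t"
  by (simp add: fibre_weight_def)

lemma image_weight_nonneg: "(\<And>x l t. 0 \<le> w x l t) \<Longrightarrow> 0 \<le> image_weight g Ts w x l m"
  by (simp add: image_weight_def sum_nonneg fibre_weight_nonneg)

lemma ignorant_part_fibre_weight: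
  "ignorant_part j (fibre_weight g m w) = fibre_weight g m (ignorant_part j w)"
  by (simp add: fun_eq_iff ignorant_part_def fibre_weight_def)

lemma ignorant_part_image_weight:
  "ignorant_part j (image_weight g Ts w) = image_weight g Ts (ignorant_part j w)"
  by (simp add: fun_eq_iff ignorant_part_def image_weight_def fibre_weight_def cong: if_cong)

lemma weight_XT_fibre_weight:
  "weight_XT (fibre_weight g m w) Ls x t = (if g t = m then weight_XT w Ls x t else 0)"
  by (simp add: weight_XT_def fibre_weight_def)

lemma weight_XT_image_weight:
  "weight_XT (image_weight g Ts w) Ls x m = (\<Sum>t\<in>Ts. if g t = m then weight_XT w Ls x t else 0)"
proof -
  have "weight_XT (image_weight g Ts w) Ls x m = (\<Sum>t\<in>Ts. weight_XT (fibre_weight g m w) Ls x t)"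
    unfolding weight_XT_def image_weight_def by (rule sum.swap)
  then show ?thesis by (simp add: weight_XT_fibre_weight)
qed

lemma weight_X_fibre_weight:
  "weight_X (fibre_weight g m w) Ls Ts x = weight_XT (image_weight g Ts w) Ls x m"
  unfolding weight_X_def weight_XT_image_weight weight_XT_fibre_weight ..

lemma weight_T_fibre_weight:
  "weight_T (fibre_weight g m w) Xs Ls t = (if g t = m then weight_T w Xs Ls t else 0)"
  by (simp add: weight_T_def weight_XT_fibre_weight)

lemma weight_total_fibre_weight:
  "weight_total (fibre_weight g m w) Xs Ls Ts = weight_T (image_weight g Ts w) Xs Ls m"
  unfolding weight_total_def weight_T_def weight_X_fibre_weight ..

lemma ignorance_supported_fibre_weight:
  "ignorance_supported n w Xs Ls Ts \<Longrightarrow> ignorance_supported n (fibre_weight g m w) Xs Ls Ts"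
  by (simp add: ignorance_supported_def ignorant_part_fibre_weight weight_XT_fibre_weight)

lemma ignorance_supported_image_weight:
  assumes "finite Ts" and nonneg: "\<And>x l t. 0 \<le> w x l t" and "ignorance_supported n w Xs Ls Ts"
  shows "ignorance_supported n (image_weight g Ts w) Xs Ls Ms"
  unfolding ignorance_supported_def
proof (intro ballI allI impI)
  fix x m j assume x: "x \<in> Xs" and j: "j < n" and pos: "0 < weight_XT (image_weight g Ts w) Ls x m"
  obtain t where t: "t \<in> Ts" "g t = m" "0 < weight_XT w Ls x t"
    using pos sum_nonpos[of Ts "\<lambda>t. if g t = m then weight_XT w Ls x t else 0"]
    by (force simp: weight_XT_image_weight)
  then have "0 < weight_XT (ignorant_part j w) Ls x t"
    using assms(3) x j unfolding ignorance_supported_def by blast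
  also have "\<dots> \<le> (\<Sum>t'\<in>Ts. if g t' = m then weight_XT (ignorant_part j w) Ls x t' else 0)"
    using member_le_sum[of t Ts "\<lambda>t'. if g t' = m then weight_XT (ignorant_part j w) Ls x t' else 0"]
      t assms(1) by (simp add: weight_XT_ignorant_part_nonneg nonneg)
  also have "\<dots> = weight_XT (ignorant_part j (image_weight g Ts w)) Ls x m"
    unfolding ignorant_part_image_weight weight_XT_image_weight ..
  finally show "0 < weight_XT (ignorant_part j (image_weight g Ts w)) Ls x m" .
qed

lemma sum_over_fibres:
  assumes "finite Ts" "finite Ms" "g ` Ts \<subseteq> Ms"
  shows "(\<Sum>m\<in>Ms. \<Sum>t\<in>Ts. if g t = m then h m t else 0) = (\<Sum>t\<in>Ts. h (g t) t)"
proof -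
  have "(\<Sum>m\<in>Ms. \<Sum>t\<in>Ts. if g t = m then h m t else 0)
      = (\<Sum>t\<in>Ts. \<Sum>m\<in>Ms. if g t = m then h m t else 0)"
    by (rule sum.swap)
  also have "\<dots> = (\<Sum>t\<in>Ts. h (g t) t)"
    using assms by (intro sum.cong refl) (auto simp: sum.delta)
  finally show ?thesis .
qed

locale message_split =
  fixes Xs :: "'x set" and Ls :: "bool list set" and Ts :: "'t set" and Ms :: "'m set"
    and g :: "'t \<Rightarrow> 'm"
  assumes finite_Xs: "finite Xs" and finite_Ts: "finite Ts" and finite_Ms: "finite Ms"
    and maps_into: "g ` Ts \<subseteq> Ms"
begin

lemmas sum_fibres = sum_over_fibres[OF finite_Ts finite_Ms maps_into]

lemma weight_X_image_weight: "weight_X (image_weight g Ts w) Ls Ms x = weight_X w Ls Ts x"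
  unfolding weight_X_def weight_XT_image_weight sum_fibres ..

lemma weight_total_image_weight:
  "weight_total (image_weight g Ts w) Xs Ls Ms = weight_total w Xs Ls Ts"
  unfolding weight_total_def weight_X_image_weight ..

lemma susp_XT_sum_fibres:
  "(\<Sum>m\<in>Ms. susp_XT (fibre_weight g m w) Xs Ls Ts j) = susp_XT w Xs Ls Ts j"
proof -
  let ?term = "\<lambda>x t. weight_XT w Ls x t
    * log 2 (weight_XT w Ls x t / weight_XT (ignorant_part j w) Ls x t)"
  have "susp_XT (fibre_weight g m w) Xs Ls Ts j
      = (\<Sum>x\<in>Xs. \<Sum>t\<in>Ts. if g t = m then ?term x t else 0)" for m
    unfolding susp_XT_def ignorant_part_fibre_weight weight_XT_fibre_weight
    by (intro sum.cong refl) simp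
  then have "(\<Sum>m\<in>Ms. susp_XT (fibre_weight g m w) Xs Ls Ts j)
      = (\<Sum>x\<in>Xs. \<Sum>m\<in>Ms. \<Sum>t\<in>Ts. if g t = m then ?term x t else 0)"
    by (simp add: sum.swap[of _ Ms])
  then show ?thesis unfolding sum_fibres susp_XT_def .
qed

lemma susp_X_sum_fibres:
  "(\<Sum>m\<in>Ms. susp_X (fibre_weight g m w) Xs Ls Ts j) = susp_XT (image_weight g Ts w) Xs Ls Ms j"
  unfolding susp_X_def susp_XT_def ignorant_part_fibre_weight weight_X_fibre_weight
    ignorant_part_image_weight
  by (rule sum.swap)

lemma susp_X_image_weight: "susp_X (image_weight g Ts w) Xs Ls Ms j = susp_X w Xs Ls Ts j"
  unfolding susp_X_def ignorant_part_image_weight weight_X_image_weight ..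

lemma info_XT_sum_fibres:
  "(\<Sum>m\<in>Ms. info_XT (fibre_weight g m w) Xs Ls Ts) = (\<Sum>x\<in>Xs. \<Sum>t\<in>Ts.
      weight_XT w Ls x t * log 2 (weight_XT w Ls x t * weight_T (image_weight g Ts w) Xs Ls (g t)
        / (weight_XT (image_weight g Ts w) Ls x (g t) * weight_T w Xs Ls t)))"
proof -
  let ?A = "weight_XT w Ls" and ?AT = "weight_T w Xs Ls"
  let ?A' = "weight_XT (image_weight g Ts w) Ls" and ?AT' = "weight_T (image_weight g Ts w) Xs Ls"
  have "info_XT (fibre_weight g m w) Xs Ls Ts = (\<Sum>x\<in>Xs. \<Sum>t\<in>Ts.
      if g t = m then ?A x t * log 2 (?A x t * ?AT' m / (?A' x m * ?AT t)) else 0)" for m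
    unfolding info_XT_def weight_XT_fibre_weight weight_T_fibre_weight weight_X_fibre_weight
      weight_total_fibre_weight
    by (intro sum.cong refl) simp
  then have "(\<Sum>m\<in>Ms. info_XT (fibre_weight g m w) Xs Ls Ts) = (\<Sum>x\<in>Xs. \<Sum>m\<in>Ms. \<Sum>t\<in>Ts.
      if g t = m then ?A x t * log 2 (?A x t * ?AT' m / (?A' x m * ?AT t)) else 0)"
    by (simp add: sum.swap[of _ Ms])
  then show ?thesis unfolding sum_fibres .
qed

lemma info_XT_image_weight:
  "info_XT (image_weight g Ts w) Xs Ls Ms = (\<Sum>x\<in>Xs. \<Sum>t\<in>Ts.
      weight_XT w Ls x t * log 2 (weight_XT (image_weight g Ts w) Ls x (g t) * weight_total w Xs Ls Ts
        / (weight_X w Ls Ts x * weight_T (image_weight g Ts w) Xs Ls (g t))))"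
proof -
  have scale: "a = (\<Sum>t\<in>Ts. if g t = m then f t else 0)
      \<Longrightarrow> a * c = (\<Sum>t\<in>Ts. if g t = m then f t * c else 0)" for a c m and f :: "'t \<Rightarrow> real"
    by (auto simp: sum_distrib_right intro!: sum.cong)
  have "info_XT (image_weight g Ts w) Xs Ls Ms = (\<Sum>x\<in>Xs. \<Sum>m\<in>Ms. \<Sum>t\<in>Ts.
      if g t = m then weight_XT w Ls x t * log 2 (weight_XT (image_weight g Ts w) Ls x m
        * weight_total w Xs Ls Ts / (weight_X w Ls Ts x * weight_T (image_weight g Ts w) Xs Ls m))
      else 0)"
    unfolding info_XT_def weight_total_image_weight weight_X_image_weight
    by (intro sum.cong refl scale weight_XT_image_weight)
  then show ?thesis by (simp add: sum_fibres)
qed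

lemma info_XT_chain_rule:
  assumes nonneg: "\<And>x l t. 0 \<le> w x l t"
  shows "(\<Sum>m\<in>Ms. info_XT (fibre_weight g m w) Xs Ls Ts) + info_XT (image_weight g Ts w) Xs Ls Ms
    = info_XT w Xs Ls Ts"
proof -
  let ?A = "weight_XT w Ls" and ?AX = "weight_X w Ls Ts" and ?AT = "weight_T w Xs Ls"
    and ?S = "weight_total w Xs Ls Ts"
  let ?A' = "weight_XT (image_weight g Ts w) Ls" and ?AT' = "weight_T (image_weight g Ts w) Xs Ls"
  have pointwise: "?A x t * log 2 (?A x t * ?AT' (g t) / (?A' x (g t) * ?AT t))
      + ?A x t * log 2 (?A' x (g t) * ?S / (?AX x * ?AT' (g t)))
      = ?A x t * log 2 (?A x t * ?S / (?AX x * ?AT t))" if x: "x \<in> Xs" and t: "t \<in> Ts" for x t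
  proof (cases "?A x t = 0")
    case False
    then have A: "0 < ?A x t" using weight_XT_nonneg[OF nonneg] by (simp add: order_less_le)
    have "?A x t \<le> ?A' x (g t)"
      unfolding weight_XT_image_weight
      using member_le_sum[of t Ts "\<lambda>t'. if g t' = g t then ?A x t' else 0"] t finite_Ts
      by (simp add: weight_XT_nonneg nonneg)
    then have A': "0 < ?A' x (g t)" using A by simp
    have "\<And>x l m. 0 \<le> image_weight g Ts w x l m" using nonneg by (rule image_weight_nonneg)
    then have AT': "0 < ?AT' (g t)"
      using A' weight_XT_le_weight_T[OF finite_Xs x] by (meson order_less_le_trans)
    have AT: "0 < ?AT t" using A weight_XT_le_weight_T[where w=w, OF finite_Xs x nonneg]
      by (meson order_less_le_trans)
    have AX: "0 < ?AX x" using A weight_XT_le_weight_X[where w=w, OF finite_Ts t nonneg]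
      by (meson order_less_le_trans)
    have S: "0 < ?S" using AX weight_X_le_weight_total[where w=w, OF finite_Xs x nonneg]
      by (meson order_less_le_trans)
    have "log 2 (?A x t * ?AT' (g t) / (?A' x (g t) * ?AT t))
        + log 2 (?A' x (g t) * ?S / (?AX x * ?AT' (g t)))
        = log 2 (?A x t * ?S / (?AX x * ?AT t))"
      using A A' AT' AT AX S by (simp add: log_mult log_divide)
    then show ?thesis by (simp add: distrib_left[symmetric])
  qed simp
  show ?thesis
    unfolding info_XT_sum_fibres info_XT_image_weight info_XT_def[of w] sum.distrib[symmetric]
    using pointwise by (intro sum.cong refl) auto
qed

lemma leakage_slack_chain_rule:
  assumes "\<And>x l t. 0 \<le> w x l t"
  shows "leakage_slack n w Xs Ls Ts
    = (\<Sum>m\<in>Ms. leakage_slack n (fibre_weight g m w) Xs Ls Ts)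
      + leakage_slack n (image_weight g Ts w) Xs Ls Ms"
proof -
  have "(\<Sum>m\<in>Ms. \<Sum>j<n. susp_XT (fibre_weight g m w) Xs Ls Ts j) = (\<Sum>j<n. susp_XT w Xs Ls Ts j)"
    by (subst sum.swap) (simp add: susp_XT_sum_fibres)
  moreover have "(\<Sum>m\<in>Ms. \<Sum>j<n. susp_X (fibre_weight g m w) Xs Ls Ts j)
      = (\<Sum>j<n. susp_XT (image_weight g Ts w) Xs Ls Ms j)"
    by (subst sum.swap) (simp add: susp_X_sum_fibres)
  ultimately have "(\<Sum>m\<in>Ms. leakage_slack n (fibre_weight g m w) Xs Ls Ts)
      = (\<Sum>j<n. susp_XT w Xs Ls Ts j) - (\<Sum>j<n. susp_XT (image_weight g Ts w) Xs Ls Ms j)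
        - (\<Sum>m\<in>Ms. info_XT (fibre_weight g m w) Xs Ls Ts)"
    unfolding leakage_slack_def sum_subtractf by simp
  then show ?thesis
    using info_XT_chain_rule[of w, OF assms]
    unfolding leakage_slack_def sum_subtractf susp_X_image_weight by linarith
qed

end

lemma leakage_slack_nonneg_of_info_XT_bound:
  assumes "finite Ts" and nonneg: "\<And>x l t. 0 \<le> w x l t"
    and supported: "ignorance_supported n w Xs Ls Ts" and "J \<subseteq> {..<n}"
    and bound: "info_XT w Xs Ls Ts \<le> (\<Sum>j\<in>J. susp_XT w Xs Ls Ts j - susp_X w Xs Ls Ts j)"
  shows "0 \<le> leakage_slack n w Xs Ls Ts"
proof -
  have "(\<Sum>j\<in>J. susp_XT w Xs Ls Ts j - susp_X w Xs Ls Ts j)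
      \<le> (\<Sum>j<n. susp_XT w Xs Ls Ts j - susp_X w Xs Ls Ts j)"
    using assms(1,4) susp_X_le_susp_XT[of Ts w n Xs Ls, OF _ nonneg supported]
    by (intro sum_mono2) auto
  then show ?thesis unfolding leakage_slack_def using bound by linarith
qed

lemma info_XT_single_transcript:
  assumes "finite Ts" and off_t0: "\<And>x l t. t \<noteq> t0 \<Longrightarrow> w x l t = 0"
  shows "info_XT w Xs Ls Ts = 0"
  unfolding info_XT_def
proof (intro sum.neutral ballI)
  fix x t assume t: "t \<in> Ts"
  have A: "weight_XT w Ls x t' = 0" if "t' \<noteq> t0" for x t'
    using off_t0 that by (simp add: weight_XT_def)
  show "weight_XT w Ls x t * log 2 (weight_XT w Ls x t * weight_total w Xs Ls Ts
      / (weight_X w Ls Ts x * weight_T w Xs Ls t)) = 0"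
  proof (cases "t = t0")
    case True
    have "weight_X w Ls Ts x' = weight_XT w Ls x' t" for x'
      unfolding weight_X_def using assms(1) t True A by (simp add: sum.remove)
    then have "weight_total w Xs Ls Ts = weight_T w Xs Ls t"
      unfolding weight_total_def weight_T_def by simp
    then show ?thesis
      \<comment> \<open>the argument of the logarithm is \<open>1\<close>, or \<open>0\<close> (and \<open>log 2 0 = 0\<close>) if the weight of \<open>t\<close> vanishes\<close>
      using \<open>weight_X w Ls Ts x = weight_XT w Ls x t\<close> by (simp add: log_def)
  qed (simp add: A)
qed

definition speaker_weight ::
    "nat \<Rightarrow> ('x \<Rightarrow> bool list \<Rightarrow> real) \<Rightarrow> ('m \<Rightarrow> real) \<Rightarrow> ('x \<Rightarrow> 'm \<Rightarrow> real) \<Rightarrow> 'x \<Rightarrow> bool list \<Rightarrow> 'm \<Rightarrow> real"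
  where "speaker_weight i \<nu> q0 qx x l m = \<nu> x l * (if l ! i then qx x m else q0 m)"

lemma speaker_weight_nonneg:
  "(\<And>x l. 0 \<le> \<nu> x l) \<Longrightarrow> (\<And>m. 0 \<le> q0 m) \<Longrightarrow> (\<And>x m. 0 \<le> qx x m)
    \<Longrightarrow> 0 \<le> speaker_weight i \<nu> q0 qx x l m"
  by (simp add: speaker_weight_def)

text \<open>An ignorant speaker's message is independent of \<open>X\<close>, so the ignorant weight factorises.\<close>

lemma weight_XT_ignorant_speaker:
  "weight_XT (ignorant_part i (speaker_weight i \<nu> q0 qx)) Ls x m
    = (\<Sum>l\<in>Ls. if l ! i then 0 else \<nu> x l) * q0 m"
  unfolding weight_XT_def speaker_weight_def ignorant_part_def sum_distrib_right by (intro sum.cong) auto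

lemma speaker_ignorance_pos:
  assumes "ignorance_supported n (speaker_weight i \<nu> q0 qx) Xs Ls Ms" "i < n"
    and "\<And>x l. 0 \<le> \<nu> x l" "\<And>m. 0 \<le> q0 m"
    and "x \<in> Xs" "m \<in> Ms" "0 < weight_XT (speaker_weight i \<nu> q0 qx) Ls x m"
  shows "0 < (\<Sum>l\<in>Ls. if l ! i then 0 else \<nu> x l)" "0 < q0 m"
proof -
  have "0 < weight_XT (ignorant_part i (speaker_weight i \<nu> q0 qx)) Ls x m"
    using assms(1,2,5-) unfolding ignorance_supported_def by blast
  moreover have "0 \<le> (\<Sum>l\<in>Ls. if l ! i then 0 else \<nu> x l)" using assms(3) by (simp add: sum_nonneg)
  ultimately show "0 < (\<Sum>l\<in>Ls. if l ! i then 0 else \<nu> x l)" "0 < q0 m"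
    using assms(4)[of m] by (auto simp: weight_XT_ignorant_speaker zero_less_mult_iff)
qed

lemma susp_gap_minus_info_XT_speaker:
  fixes \<nu> :: "'x \<Rightarrow> bool list \<Rightarrow> real" and q0 :: "'m \<Rightarrow> real" and qx :: "'x \<Rightarrow> 'm \<Rightarrow> real"
    and i :: nat
  defines "v \<equiv> speaker_weight i \<nu> q0 qx"
  assumes "finite Xs" "finite Ms"
    and nonneg: "\<And>x l. 0 \<le> \<nu> x l" "\<And>m. 0 \<le> q0 m" "\<And>x m. 0 \<le> qx x m"
    and q0_sum: "(\<Sum>m\<in>Ms. q0 m) = 1"
    and supported: "ignorance_supported n v Xs Ls Ms" and "i < n"
  shows "susp_XT v Xs Ls Ms i - susp_X v Xs Ls Ms i - info_XT v Xs Ls Ms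
    = (\<Sum>m\<in>Ms. weight_T v Xs Ls m * log 2 (weight_T v Xs Ls m / (weight_total v Xs Ls Ms * q0 m)))"
proof -
  let ?A = "weight_XT v Ls" and ?AX = "weight_X v Ls Ms" and ?AT = "weight_T v Xs Ls"
    and ?S = "weight_total v Xs Ls Ms"
  have v_nonneg: "\<And>x l m. 0 \<le> v x l m" unfolding v_def using nonneg by (rule speaker_weight_nonneg)
  define c where "c x = (\<Sum>l\<in>Ls. if l ! i then 0 else \<nu> x l)" for x
  have ign_XT: "weight_XT (ignorant_part i v) Ls x m = c x * q0 m" for x m
    unfolding v_def c_def by (rule weight_XT_ignorant_speaker)
  have ign_X: "weight_X (ignorant_part i v) Ls Ms x = c x" for x
    unfolding weight_X_def ign_XT sum_distrib_left[symmetric] q0_sum by simp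
  note pos = speaker_ignorance_pos[OF supported[unfolded v_def] \<open>i < n\<close> nonneg(1,2), folded v_def c_def]
  have pointwise: "?A x m * log 2 (?A x m / weight_XT (ignorant_part i v) Ls x m)
      - ?A x m * log 2 (?AX x / c x) - ?A x m * log 2 (?A x m * ?S / (?AX x * ?AT m))
      = ?A x m * log 2 (?AT m / (?S * q0 m))" if x: "x \<in> Xs" and m: "m \<in> Ms" for x m
  proof (cases "?A x m = 0")
    case False
    then have A: "0 < ?A x m" using weight_XT_nonneg[of v, OF v_nonneg] by (simp add: order_less_le)
    have AX: "0 < ?AX x" using A weight_XT_le_weight_X[where w=v, OF \<open>finite Ms\<close> m v_nonneg]
      by (meson order_less_le_trans)
    have AT: "0 < ?AT m" using A weight_XT_le_weight_T[where w=v, OF \<open>finite Xs\<close> x v_nonneg]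
      by (meson order_less_le_trans)
    have S: "0 < ?S" using AX weight_X_le_weight_total[where w=v, OF \<open>finite Xs\<close> x v_nonneg]
      by (meson order_less_le_trans)
    have "log 2 (?A x m / (c x * q0 m)) - log 2 (?AX x / c x) - log 2 (?A x m * ?S / (?AX x * ?AT m))
        = log 2 (?AT m / (?S * q0 m))"
      using A AX AT S pos[OF x m A] by (simp add: log_mult log_divide)
    then show ?thesis unfolding ign_XT by (simp add: right_diff_distrib[symmetric])
  qed simp
  have X_eq: "susp_X v Xs Ls Ms i = (\<Sum>x\<in>Xs. \<Sum>m\<in>Ms. ?A x m * log 2 (?AX x / c x))"
    unfolding susp_X_def ign_X by (simp add: weight_X_def sum_distrib_right)
  have "susp_XT v Xs Ls Ms i - susp_X v Xs Ls Ms i - info_XT v Xs Ls Ms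
      = (\<Sum>x\<in>Xs. \<Sum>m\<in>Ms. ?A x m * log 2 (?AT m / (?S * q0 m)))"
    unfolding susp_XT_def info_XT_def X_eq sum_subtractf[symmetric]
    using pointwise by (intro sum.cong refl) simp
  also have "\<dots> = (\<Sum>m\<in>Ms. ?AT m * log 2 (?AT m / (?S * q0 m)))"
    unfolding weight_T_def sum_distrib_right by (rule sum.swap)
  finally show ?thesis .
qed

lemma info_XT_le_susp_gap_speaker:
  fixes \<nu> :: "'x \<Rightarrow> bool list \<Rightarrow> real" and q0 :: "'m \<Rightarrow> real" and qx :: "'x \<Rightarrow> 'm \<Rightarrow> real"
    and i :: nat
  defines "v \<equiv> speaker_weight i \<nu> q0 qx"
  assumes "finite Xs" "finite Ms"
    and nonneg: "\<And>x l. 0 \<le> \<nu> x l" "\<And>m. 0 \<le> q0 m" "\<And>x m. 0 \<le> qx x m"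
    and q0_sum: "(\<Sum>m\<in>Ms. q0 m) = 1"
    and supported: "ignorance_supported n v Xs Ls Ms" and "i < n"
  shows "info_XT v Xs Ls Ms \<le> susp_XT v Xs Ls Ms i - susp_X v Xs Ls Ms i"
proof -
  have v_nonneg: "\<And>x l m. 0 \<le> v x l m" unfolding v_def using nonneg by (rule speaker_weight_nonneg)
  have "0 \<le> (\<Sum>m\<in>Ms. weight_T v Xs Ls m * log 2 (weight_T v Xs Ls m / (weight_total v Xs Ls Ms * q0 m)))"
    unfolding weight_total_eq_sum_weight_T
  proof (rule gibbs_inequality[OF \<open>finite Ms\<close> _ nonneg(2) q0_sum])
    fix m assume m: "m \<in> Ms"
    show "0 \<le> weight_T v Xs Ls m" using v_nonneg by (rule weight_T_nonneg)
    assume "0 < weight_T v Xs Ls m"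
    then obtain x where "x \<in> Xs" "0 < weight_XT v Ls x m"
      unfolding weight_T_def using sum_nonpos[of Xs "\<lambda>x. weight_XT v Ls x m"] by (meson not_less)
    then show "0 < q0 m"
      using speaker_ignorance_pos(2)[OF supported[unfolded v_def] \<open>i < n\<close> nonneg(1,2) _ m] v_def by blast
  qed
  then show ?thesis
    using susp_gap_minus_info_XT_speaker[OF \<open>finite Xs\<close> \<open>finite Ms\<close> nonneg q0_sum
        supported[unfolded v_def] \<open>i < n\<close>]
    unfolding v_def by simp
qed

lemma leakage_slack_nonneg_single_transcript:
  assumes "finite Ts" "\<And>x l t. 0 \<le> w x l t" "ignorance_supported n w Xs Ls Ts"
    and "\<And>x l t. t \<noteq> t0 \<Longrightarrow> w x l t = 0"
  shows "0 \<le> leakage_slack n w Xs Ls Ts"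
  using assms info_XT_single_transcript[of Ts t0 w, OF assms(1,4)]
  by (intro leakage_slack_nonneg_of_info_XT_bound[where J = "{}"]) auto

lemma leakage_slack_speaker_weight_nonneg:
  assumes "finite Xs" "finite Ms" "\<And>x l. 0 \<le> \<nu> x l" "\<And>m. 0 \<le> q0 m" "\<And>x m. 0 \<le> qx x m"
    and "(\<Sum>m\<in>Ms. q0 m) = 1" "ignorance_supported n (speaker_weight i \<nu> q0 qx) Xs Ls Ms" "i < n"
  shows "0 \<le> leakage_slack n (speaker_weight i \<nu> q0 qx) Xs Ls Ms"
  using assms info_XT_le_susp_gap_speaker[OF assms]
  by (intro leakage_slack_nonneg_of_info_XT_bound[where J = "{i}"] speaker_weight_nonneg) auto

lemma set_pmf_run_protocol_prefix:
  "s \<in> set_pmf (run_protocol prot k x l t) \<Longrightarrow> \<exists>u. s = t @ u"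
proof (induction k arbitrary: t)
  case (Suc k)
  then show ?case
    by (fastforce split: option.splits simp: set_bind_pmf)
qed simp

lemma pmf_run_protocol_other_branch:
  assumes "t ! length t0 \<noteq> m"
  shows "pmf (run_protocol prot k x l (t0 @ [m])) t = 0"
proof (rule ccontr)
  assume "pmf (run_protocol prot k x l (t0 @ [m])) t \<noteq> 0"
  then obtain u where "t = (t0 @ [m]) @ u"
    using set_pmf_run_protocol_prefix by (metis set_pmf_iff)
  then show False using assms by simp
qed

lemma finite_set_pmf_run_protocol:
  assumes "\<forall>t i p0 px. prot t = Some (i, p0, px) \<longrightarrow> finite (set_pmf p0) \<and> (\<forall>x. finite (set_pmf (px x)))"
  shows "finite (set_pmf (run_protocol prot k x l t))"
proof (induction k arbitrary: t)
  case (Suc k)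
  then show ?case
    using assms by (auto split: option.splits simp: set_bind_pmf)
qed simp

lemma set_pmf_run_protocol_Suc:
  assumes "prot t0 = Some (i, p0, px)" "m \<in> set_pmf (if l ! i then px x else p0)"
  shows "set_pmf (run_protocol prot k x l (t0 @ [m])) \<subseteq> set_pmf (run_protocol prot (Suc k) x l t0)"
  using assms by (auto simp: set_bind_pmf)

lemma pmf_run_protocol_Suc:
  assumes "prot t0 = Some (i, p0, px)"
  shows "pmf (run_protocol prot (Suc k) x l t0) t
    = pmf (if l ! i then px x else p0) (t ! length t0)
      * pmf (run_protocol prot k x l (t0 @ [t ! length t0])) t"
proof -
  let ?q = "if l ! i then px x else p0" and ?run = "\<lambda>m. run_protocol prot k x l (t0 @ [m])"
  have "pmf (?run m) t = 0" if "m \<noteq> t ! length t0" for m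
    using that by (intro pmf_run_protocol_other_branch) simp
  then have "(LINT m|measure_pmf ?q. pmf (?run m) t) = (\<Sum>m\<in>{t ! length t0}. pmf ?q m *\<^sub>R pmf (?run m) t)"
    by (intro integral_measure_pmf) auto
  then show ?thesis using assms by (simp add: pmf_bind)
qed

lemma fibre_weight_run_protocol:
  assumes "prot t0 = Some (i, p0, px)"
  shows "fibre_weight (\<lambda>t. t ! length t0) m (\<lambda>x l t. \<nu> x l * pmf (run_protocol prot (Suc k) x l t0) t)
    = (\<lambda>x l t. (\<nu> x l * pmf (if l ! i then px x else p0) m) * pmf (run_protocol prot k x l (t0 @ [m])) t)"
proof (intro ext)
  fix x l t
  show "fibre_weight (\<lambda>t. t ! length t0) m
      (\<lambda>x l t. \<nu> x l * pmf (run_protocol prot (Suc k) x l t0) t) x l t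
      = \<nu> x l * pmf (if l ! i then px x else p0) m * pmf (run_protocol prot k x l (t0 @ [m])) t"
    unfolding fibre_weight_def pmf_run_protocol_Suc[of prot t0, OF assms]
    by (auto simp: pmf_run_protocol_other_branch)
qed

lemma image_weight_run_protocol:
  assumes step: "prot t0 = Some (i, p0, px)" and "finite Ts"
    and support: "\<And>x l. \<nu> x l \<noteq> 0 \<Longrightarrow> set_pmf (run_protocol prot (Suc k) x l t0) \<subseteq> Ts"
  shows "image_weight (\<lambda>t. t ! length t0) Ts (\<lambda>x l t. \<nu> x l * pmf (run_protocol prot (Suc k) x l t0) t)
    = speaker_weight i \<nu> (pmf p0) (\<lambda>x. pmf (px x))"
proof (intro ext)
  fix x l m
  let ?q = "if l ! i then px x else p0"
  have "(\<Sum>t\<in>Ts. pmf (run_protocol prot k x l (t0 @ [m])) t) = 1" if "\<nu> x l * pmf ?q m \<noteq> 0"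
  proof (rule sum_pmf_eq_1[OF \<open>finite Ts\<close>])
    have "\<nu> x l \<noteq> 0" "m \<in> set_pmf ?q" using that by (auto simp: set_pmf_iff)
    then show "set_pmf (run_protocol prot k x l (t0 @ [m])) \<subseteq> Ts"
      using set_pmf_run_protocol_Suc[of prot t0, OF step] support by blast
  qed
  then show "image_weight (\<lambda>t. t ! length t0) Ts
      (\<lambda>x l t. \<nu> x l * pmf (run_protocol prot (Suc k) x l t0) t) x l m
      = speaker_weight i \<nu> (pmf p0) (\<lambda>x. pmf (px x)) x l m"
    unfolding image_weight_def fibre_weight_run_protocol[of prot t0, OF step] speaker_weight_def
    by (cases "\<nu> x l * pmf ?q m = 0") (auto simp: sum_distrib_left[symmetric] if_distrib)
qed

lemma leakage_slack_first_message_nonneg: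
  fixes \<nu> :: "'x \<Rightarrow> bool list \<Rightarrow> real" and prot :: "('x, 'm) protocol" and k :: nat and t0 :: "'m list"
  defines "w \<equiv> \<lambda>x l t. \<nu> x l * pmf (run_protocol prot (Suc k) x l t0) t"
  assumes step: "prot t0 = Some (i, p0, px)" and "i < n" "finite Xs" "finite Ts" "finite Ms"
    and nonneg: "\<And>x l. 0 \<le> \<nu> x l"
    and support: "\<And>x l. \<nu> x l \<noteq> 0 \<Longrightarrow> set_pmf (run_protocol prot (Suc k) x l t0) \<subseteq> Ts"
    and supported: "ignorance_supported n w Xs Ls Ts"
    and "set_pmf p0 \<subseteq> Ms"
  shows "0 \<le> leakage_slack n (image_weight (\<lambda>t. t ! length t0) Ts w) Xs Ls Ms"
proof -
  have image_eq: "image_weight (\<lambda>t. t ! length t0) Ts w = speaker_weight i \<nu> (pmf p0) (\<lambda>x. pmf (px x))"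
    unfolding w_def using step \<open>finite Ts\<close> support by (rule image_weight_run_protocol)
  have w_nonneg: "\<And>x l t. 0 \<le> w x l t" unfolding w_def using nonneg by simp
  have "ignorance_supported n (image_weight (\<lambda>t. t ! length t0) Ts w) Xs Ls Ms"
    by (rule ignorance_supported_image_weight[of Ts w, OF \<open>finite Ts\<close> w_nonneg supported])
  moreover have "(\<Sum>m\<in>Ms. pmf p0 m) = 1" using \<open>finite Ms\<close> \<open>set_pmf p0 \<subseteq> Ms\<close> by (rule sum_pmf_eq_1)
  ultimately show ?thesis
    unfolding image_eq using assms by (intro leakage_slack_speaker_weight_nonneg) auto
qed

lemma leakage_slack_run_protocol_nonneg:
  fixes \<nu> :: "'x \<Rightarrow> bool list \<Rightarrow> real"
  assumes players: "\<forall>t i p0 px. prot t = Some (i, p0, px) \<longrightarrow> i < n"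
    and finite_p0: "\<forall>t i p0 px. prot t = Some (i, p0, px) \<longrightarrow> finite (set_pmf p0)"
    and "finite Xs" "finite Ts" and nonneg: "\<And>x l. 0 \<le> \<nu> x l"
    and support: "\<And>x l. \<nu> x l \<noteq> 0 \<Longrightarrow> set_pmf (run_protocol prot k x l t0) \<subseteq> Ts"
    and supported: "ignorance_supported n (\<lambda>x l t. \<nu> x l * pmf (run_protocol prot k x l t0) t) Xs Ls Ts"
  shows "0 \<le> leakage_slack n (\<lambda>x l t. \<nu> x l * pmf (run_protocol prot k x l t0) t) Xs Ls Ts"
  using assms(4-)
proof (induction k arbitrary: t0 \<nu> Ts)
  case 0
  then show ?case by (intro leakage_slack_nonneg_single_transcript[where ?t0.0 = t0]) auto
next
  case (Suc k)
  let ?w = "\<lambda>x l t. \<nu> x l * pmf (run_protocol prot (Suc k) x l t0) t"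
  have w_nonneg: "\<And>x l t. 0 \<le> ?w x l t" using Suc.prems(2) by simp
  show ?case
  proof (cases "prot t0")
    case None
    then show ?thesis
      using Suc.prems w_nonneg by (intro leakage_slack_nonneg_single_transcript[where ?t0.0 = t0]) auto
  next
    case (Some a)
    then obtain i p0 px where step: "prot t0 = Some (i, p0, px)" by (cases a) auto
    have "i < n" using players step by blast
    define g :: "'a list \<Rightarrow> 'a" where "g t = t ! length t0" for t
    define Ms where "Ms = g ` Ts \<union> set_pmf p0"
    interpret message_split Xs Ls Ts Ms g
      using \<open>finite Xs\<close> Suc.prems(1) finite_p0 step by unfold_locales (auto simp: Ms_def)
    have "0 \<le> leakage_slack n (fibre_weight g m ?w) Xs Ls Ts" for m
      unfolding g_def fibre_weight_run_protocol[of prot t0, OF step]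
    proof (rule Suc.IH)
      show "ignorance_supported n (\<lambda>x l t. \<nu> x l * pmf (if l ! i then px x else p0) m
          * pmf (run_protocol prot k x l (t0 @ [m])) t) Xs Ls Ts"
        using ignorance_supported_fibre_weight[OF Suc.prems(4), of g m]
        unfolding g_def fibre_weight_run_protocol[of prot t0, OF step] .
      show "set_pmf (run_protocol prot k x l (t0 @ [m])) \<subseteq> Ts"
        if "\<nu> x l * pmf (if l ! i then px x else p0) m \<noteq> 0" for x l
        using that set_pmf_run_protocol_Suc[of prot t0 i p0 px m l x k, OF step] Suc.prems(3)
        by (auto simp: set_pmf_iff)
    qed (use Suc.prems in auto)
    moreover have "0 \<le> leakage_slack n (image_weight g Ts ?w) Xs Ls Ms"
      unfolding g_def using step \<open>i < n\<close> \<open>finite Xs\<close> Suc.prems(1) finite_Ms Suc.prems(2-)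
      by (rule leakage_slack_first_message_nonneg) (auto simp: Ms_def)
    ultimately show ?thesis
      unfolding leakage_slack_chain_rule[of ?w n, OF w_nonneg] by (simp add: sum_nonneg)
  qed
qed

lemma measure_pmf_prob_eq_sum_pmf:
  assumes "finite A" "A \<subseteq> E" "E \<inter> set_pmf p \<subseteq> A"
  shows "measure_pmf.prob p E = sum (pmf p) A"
proof -
  have "E \<inter> set_pmf p = A \<inter> set_pmf p" using assms(2,3) by blast
  then have "measure_pmf.prob p E = measure_pmf.prob p A"
    by (metis measure_Int_set_pmf)
  also have "\<dots> = sum (pmf p) A" using assms(1) by (rule measure_measure_pmf_finite)
  finally show ?thesis .
qed

lemma susp_eq_sum:
  assumes "\<And>y. y \<in> fst ` set_pmf Q \<Longrightarrow> 0 < cond_ignorant Q i y"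
  shows "susp Q i = ereal (\<Sum>y\<in>fst ` set_pmf Q. pmf (map_pmf fst Q) y * - log 2 (cond_ignorant Q i y))"
  unfolding susp_def sum_ereal[symmetric]
proof (intro sum.cong refl)
  fix y assume "y \<in> fst ` set_pmf Q"
  then have "0 < cond_ignorant Q i y" by (rule assms)
  then show "ereal (pmf (map_pmf fst Q) y) * neglog (cond_ignorant Q i y)
      = ereal (pmf (map_pmf fst Q) y * - log 2 (cond_ignorant Q i y))"
    by (simp add: neglog_def)
qed

lemma susp_eq_infinity:
  assumes "finite (set_pmf Q)" "y \<in> fst ` set_pmf Q" "cond_ignorant Q i y = 0"
  shows "susp Q i = \<infinity>"
proof -
  have "0 < pmf (map_pmf fst Q) y" using assms(2) by (simp add: pmf_positive)
  then have "ereal (pmf (map_pmf fst Q) y) * neglog (cond_ignorant Q i y) = \<infinity>"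
    using assms(3) by (simp add: neglog_def)
  then show ?thesis unfolding susp_def using assms(1,2) by (subst sum_Pinfty) auto
qed

locale finite_joint_pmf =
  fixes J :: "('x \<times> bool list \<times> 't) pmf" and Xs :: "'x set" and Ls :: "bool list set" and Ts :: "'t set"
  assumes finite_Xs: "finite Xs" and finite_Ls: "finite Ls" and finite_Ts: "finite Ts"
    and support: "set_pmf J \<subseteq> Xs \<times> Ls \<times> Ts"
begin

abbreviation w :: "'x \<Rightarrow> bool list \<Rightarrow> 't \<Rightarrow> real" where "w \<equiv> \<lambda>x l t. pmf J (x, l, t)"

lemma prob_fix_XT:
  "measure_pmf.prob J {(x', l, t'). x' = x \<and> t' = t \<and> Q l} = (\<Sum>l\<in>Ls. if Q l then w x l t else 0)"
proof -
  have "measure_pmf.prob J {(x', l, t'). x' = x \<and> t' = t \<and> Q l} = sum (pmf J) ({x} \<times> {l\<in>Ls. Q l} \<times> {t})"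
    using finite_Ls support by (intro measure_pmf_prob_eq_sum_pmf) auto
  also have "\<dots> = (\<Sum>l\<in>Ls. if Q l then w x l t else 0)"
    unfolding sum.cartesian_product' using finite_Ls by (simp add: sum.inter_filter)
  finally show ?thesis .
qed

lemma prob_fix_X:
  "measure_pmf.prob J {(x', l, t). x' = x \<and> Q l} = (\<Sum>t\<in>Ts. \<Sum>l\<in>Ls. if Q l then w x l t else 0)"
proof -
  have "measure_pmf.prob J {(x', l, t). x' = x \<and> Q l} = sum (pmf J) ({x} \<times> {l\<in>Ls. Q l} \<times> Ts)"
    using finite_Ls finite_Ts support by (intro measure_pmf_prob_eq_sum_pmf) auto
  also have "\<dots> = (\<Sum>t\<in>Ts. \<Sum>l\<in>Ls. if Q l then w x l t else 0)"
    unfolding sum.cartesian_product' using finite_Ls by (simp add: sum.inter_filter sum.swap[of _ Ts])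
  finally show ?thesis .
qed

lemma prob_fix_T: "measure_pmf.prob J {(x, l, t'). t' = t} = (\<Sum>x\<in>Xs. \<Sum>l\<in>Ls. w x l t)"
proof -
  have "measure_pmf.prob J {(x, l, t'). t' = t} = sum (pmf J) (Xs \<times> Ls \<times> {t})"
    using finite_Xs finite_Ls support by (intro measure_pmf_prob_eq_sum_pmf) auto
  also have "\<dots> = (\<Sum>x\<in>Xs. \<Sum>l\<in>Ls. w x l t)" unfolding sum.cartesian_product' by simp
  finally show ?thesis .
qed

lemma weight_total_eq_1: "weight_total w Xs Ls Ts = 1"
proof -
  have "weight_total w Xs Ls Ts = sum (pmf J) (Xs \<times> Ls \<times> Ts)"
    unfolding weight_total_def weight_X_def weight_XT_def sum.cartesian_product'
    by (simp add: sum.swap[of _ Ts])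
  also have "\<dots> = 1" using finite_Xs finite_Ls finite_Ts support by (intro sum_pmf_eq_1) auto
  finally show ?thesis .
qed

lemma pmf_map_XT: "pmf (map_pmf (\<lambda>(x, l, t). (x, t)) J) (x, t) = weight_XT w Ls x t"
proof -
  have preimage: "(\<lambda>(x, l, t). (x, t)) -` {(x, t)} = {(x', l, t'). x' = x \<and> t' = t \<and> True}" by auto
  have "pmf (map_pmf (\<lambda>(x, l, t). (x, t)) J) (x, t) = (\<Sum>l\<in>Ls. if True then w x l t else 0)"
    unfolding pmf_map preimage prob_fix_XT by simp
  then show ?thesis by (simp add: weight_XT_def)
qed

lemma pmf_map_X: "pmf (map_pmf (\<lambda>(x, l, t). x) J) x = weight_X w Ls Ts x"
proof -
  have preimage: "(\<lambda>(x, l, t). x) -` {x} = {(x', l, t). x' = x \<and> True}" by auto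
  have "pmf (map_pmf (\<lambda>(x, l, t). x) J) x = (\<Sum>t\<in>Ts. \<Sum>l\<in>Ls. if True then w x l t else 0)"
    unfolding pmf_map preimage prob_fix_X by simp
  then show ?thesis by (simp add: weight_X_def weight_XT_def)
qed

lemma pmf_map_T: "pmf (map_pmf (\<lambda>(x, l, t). t) J) t = weight_T w Xs Ls t"
proof -
  have preimage: "(\<lambda>(x, l, t). t) -` {t} = {(x, l, t'). t' = t}" by auto
  have "pmf (map_pmf (\<lambda>(x, l, t). t) J) t = (\<Sum>x\<in>Xs. \<Sum>l\<in>Ls. w x l t)"
    unfolding pmf_map preimage prob_fix_T by simp
  then show ?thesis by (simp add: weight_T_def weight_XT_def)
qed

lemma prob_map_XT_L:
  "measure_pmf.prob (map_pmf (\<lambda>(x, l, t). ((x, t), l)) J) {(y, l). y = (x, t) \<and> Q l}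
    = (\<Sum>l\<in>Ls. if Q l then w x l t else 0)"
proof -
  have preimage: "(\<lambda>(x, l, t). ((x, t), l)) -` {(y, l). y = (x, t) \<and> Q l}
      = {(x', l, t'). x' = x \<and> t' = t \<and> Q l}"
    by auto
  show ?thesis unfolding measure_map_pmf preimage prob_fix_XT by simp
qed

lemma prob_map_X_L:
  "measure_pmf.prob (map_pmf (\<lambda>(x, l, t). (x, l)) J) {(x', l). x' = x \<and> Q l}
    = (\<Sum>t\<in>Ts. \<Sum>l\<in>Ls. if Q l then w x l t else 0)"
proof -
  have preimage: "(\<lambda>(x, l, t). (x, l)) -` {(x', l). x' = x \<and> Q l} = {(x', l, t). x' = x \<and> Q l}" by auto
  show ?thesis unfolding measure_map_pmf preimage prob_fix_X by simp
qed

lemma cond_ignorant_XT: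
  "cond_ignorant (map_pmf (\<lambda>(x, l, t). ((x, t), l)) J) j (x, t)
    = weight_XT (ignorant_part j w) Ls x t / weight_XT w Ls x t"
proof -
  have event: "{(y, l). y = (x, t)} = {(y, l). y = (x, t) \<and> True}" by simp
  show ?thesis
    unfolding cond_ignorant_def event prob_map_XT_L weight_XT_def ignorant_part_as_if by simp
qed

lemma prob_map_X_L_ignorant:
  "measure_pmf.prob (map_pmf (\<lambda>(x, l, t). (x, l)) J) {(x', l). x' = x \<and> \<not> l ! j}
    = weight_X (ignorant_part j w) Ls Ts x"
  unfolding prob_map_X_L weight_X_def weight_XT_def ignorant_part_as_if ..

lemma cond_ignorant_X:
  "cond_ignorant (map_pmf (\<lambda>(x, l, t). (x, l)) J) j x
    = weight_X (ignorant_part j w) Ls Ts x / weight_X w Ls Ts x"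
proof -
  have event: "{(x', l). x' = x} = {(x', l). x' = x \<and> True}" by simp
  show ?thesis
    unfolding cond_ignorant_def prob_map_X_L_ignorant event prob_map_X_L
    by (simp add: weight_X_def weight_XT_def)
qed

lemma set_pmf_map_XT: "set_pmf (map_pmf (\<lambda>(x, l, t). (x, t)) J) \<subseteq> Xs \<times> Ts"
  using support by auto

lemma mutual_info_eq_info_XT: "mutual_info (map_pmf (\<lambda>(x, l, t). (x, t)) J) = info_XT w Xs Ls Ts"
proof -
  let ?P = "map_pmf (\<lambda>(x, l, t). (x, t)) J"
  have marginals: "map_pmf fst ?P = map_pmf (\<lambda>(x, l, t). x) J"
      "map_pmf snd ?P = map_pmf (\<lambda>(x, l, t). t) J"
    unfolding map_pmf_comp by (auto intro!: map_pmf_cong)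
  have "mutual_info ?P = (\<Sum>(x, t)\<in>Xs \<times> Ts.
      pmf ?P (x, t) * log 2 (pmf ?P (x, t) / (pmf (map_pmf fst ?P) x * pmf (map_pmf snd ?P) t)))"
    unfolding mutual_info_def using finite_Xs finite_Ts set_pmf_map_XT
    by (intro sum.mono_neutral_left) (auto simp: pmf_eq_0_set_pmf)
  also have "\<dots> = info_XT w Xs Ls Ts"
    unfolding sum.cartesian_product[symmetric] info_XT_def marginals
    by (simp add: pmf_map_XT pmf_map_X pmf_map_T weight_total_eq_1)
  finally show ?thesis .
qed

lemma susp_XT_eq:
  assumes supported: "ignorance_supported n w Xs Ls Ts" and "j < n"
  shows "susp (map_pmf (\<lambda>(x, l, t). ((x, t), l)) J) j = ereal (susp_XT w Xs Ls Ts j)"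
proof -
  let ?Q = "map_pmf (\<lambda>(x, l, t). ((x, t), l)) J" and ?P = "map_pmf (\<lambda>(x, l, t). (x, t)) J"
  have fst_Q: "map_pmf fst ?Q = ?P" unfolding map_pmf_comp by (auto intro!: map_pmf_cong)
  then have fst_set_Q: "fst ` set_pmf ?Q = set_pmf ?P" by (metis set_map_pmf)
  have ign_pos: "0 < weight_XT (ignorant_part j w) Ls x t"
    if "x \<in> Xs" "t \<in> Ts" "0 < weight_XT w Ls x t" for x t
    using supported that \<open>j < n\<close> unfolding ignorance_supported_def by blast
  have "susp ?Q j = ereal (\<Sum>y\<in>set_pmf ?P. pmf ?P y * - log 2 (cond_ignorant ?Q j y))"
  proof (subst susp_eq_sum)
    show "0 < cond_ignorant ?Q j y" if "y \<in> fst ` set_pmf ?Q" for y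
    proof -
      have y: "y \<in> set_pmf ?P" using that unfolding fst_set_Q .
      obtain x t where xt: "y = (x, t)" by (cases y)
      have "x \<in> Xs" "t \<in> Ts" using y set_pmf_map_XT unfolding xt by auto
      moreover have "0 < weight_XT w Ls x t" using pmf_positive[OF y] unfolding xt pmf_map_XT .
      ultimately show ?thesis using ign_pos unfolding xt cond_ignorant_XT by simp
    qed
  qed (simp only: fst_Q fst_set_Q)
  also have "(\<Sum>y\<in>set_pmf ?P. pmf ?P y * - log 2 (cond_ignorant ?Q j y))
      = (\<Sum>y\<in>Xs \<times> Ts. pmf ?P y * - log 2 (cond_ignorant ?Q j y))"
    using finite_Xs finite_Ts set_pmf_map_XT
    by (intro sum.mono_neutral_left) (auto simp: pmf_eq_0_set_pmf)
  also have "\<dots> = susp_XT w Xs Ls Ts j"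
    unfolding sum.cartesian_product' susp_XT_def
  proof (intro sum.cong refl)
    fix x t assume xt: "x \<in> Xs" "t \<in> Ts"
    show "pmf ?P (x, t) * - log 2 (cond_ignorant ?Q j (x, t))
        = weight_XT w Ls x t * log 2 (weight_XT w Ls x t / weight_XT (ignorant_part j w) Ls x t)"
    proof (cases "weight_XT w Ls x t = 0")
      case False
      then have "0 < weight_XT w Ls x t" using weight_XT_nonneg[of w Ls x t] by simp
      then show ?thesis
        using ign_pos[OF xt] unfolding pmf_map_XT cond_ignorant_XT by (simp add: log_divide)
    qed (simp add: pmf_map_XT)
  qed
  finally show ?thesis .
qed

lemma susp_XT_infinite:
  assumes "\<not> ignorance_supported n w Xs Ls Ts"
  shows "\<exists>j<n. susp (map_pmf (\<lambda>(x, l, t). ((x, t), l)) J) j = \<infinity>"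
proof -
  let ?Q = "map_pmf (\<lambda>(x, l, t). ((x, t), l)) J" and ?P = "map_pmf (\<lambda>(x, l, t). (x, t)) J"
  obtain x t j where "j < n" and pos: "0 < weight_XT w Ls x t"
    and not_pos: "\<not> 0 < weight_XT (ignorant_part j w) Ls x t"
    using assms unfolding ignorance_supported_def by blast
  have "0 \<le> weight_XT (ignorant_part j w) Ls x t"
    by (rule weight_XT_ignorant_part_nonneg) simp
  then have cond_0: "cond_ignorant ?Q j (x, t) = 0"
    using not_pos by (simp add: cond_ignorant_XT)
  have "map_pmf fst ?Q = ?P" unfolding map_pmf_comp by (auto intro!: map_pmf_cong)
  then have fst_set_Q: "fst ` set_pmf ?Q = set_pmf ?P" by (metis set_map_pmf)
  have "(x, t) \<in> set_pmf ?P" unfolding set_pmf_iff pmf_map_XT using pos by simp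
  then have in_support: "(x, t) \<in> fst ` set_pmf ?Q" unfolding fst_set_Q .
  have "finite (set_pmf J)"
    by (rule finite_subset[OF support]) (simp add: finite_Xs finite_Ls finite_Ts)
  then have "finite (set_pmf ?Q)" by simp
  then have "susp ?Q j = \<infinity>" using in_support cond_0 by (rule susp_eq_infinity)
  then show ?thesis using \<open>j < n\<close> by blast
qed

lemma susp_X_eq:
  assumes ign_pos: "\<forall>x\<in>Xs. 0 < weight_X (ignorant_part j w) Ls Ts x"
  shows "susp (map_pmf (\<lambda>(x, l, t). (x, l)) J) j = ereal (susp_X w Xs Ls Ts j)"
proof -
  let ?Q = "map_pmf (\<lambda>(x, l, t). (x, l)) J"
  have fst_Q: "map_pmf fst ?Q = map_pmf (\<lambda>(x, l, t). x) J"
    unfolding map_pmf_comp by (auto intro!: map_pmf_cong)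
  have support_Q: "fst ` set_pmf ?Q \<subseteq> Xs" using support by auto
  have weight_pos: "0 < weight_X w Ls Ts x" if "x \<in> Xs" for x
  proof -
    have "weight_X (ignorant_part j w) Ls Ts x \<le> weight_X w Ls Ts x"
      by (rule weight_X_ignorant_part_le) simp
    then show ?thesis using ign_pos that by fastforce
  qed
  have "susp ?Q j = ereal (\<Sum>x\<in>fst ` set_pmf ?Q. pmf (map_pmf fst ?Q) x * - log 2 (cond_ignorant ?Q j x))"
  proof (rule susp_eq_sum)
    fix x assume "x \<in> fst ` set_pmf ?Q"
    then have "x \<in> Xs" using support_Q by blast
    then show "0 < cond_ignorant ?Q j x" using ign_pos weight_pos by (simp add: cond_ignorant_X)
  qed
  also have "(\<Sum>x\<in>fst ` set_pmf ?Q. pmf (map_pmf fst ?Q) x * - log 2 (cond_ignorant ?Q j x))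
      = (\<Sum>x\<in>Xs. pmf (map_pmf fst ?Q) x * - log 2 (cond_ignorant ?Q j x))"
    using finite_Xs support_Q
    by (intro sum.mono_neutral_left) (auto simp: pmf_eq_0_set_pmf)
  also have "\<dots> = susp_X w Xs Ls Ts j"
    unfolding susp_X_def fst_Q using ign_pos weight_pos
    by (intro sum.cong refl) (simp add: pmf_map_X cond_ignorant_X log_divide algebra_simps)
  finally show ?thesis .
qed

lemma mutual_info_le_susp_sum:
  assumes ign_pos: "\<forall>x\<in>Xs. \<forall>j<n.
      0 < measure_pmf.prob (map_pmf (\<lambda>(x, l, t). (x, l)) J) {(x', l). x' = x \<and> \<not> l ! j}"
    and slack: "ignorance_supported n w Xs Ls Ts \<Longrightarrow> 0 \<le> leakage_slack n w Xs Ls Ts"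
  shows "ereal (mutual_info (map_pmf (\<lambda>(x, l, t). (x, t)) J))
    \<le> (\<Sum>j<n. susp (map_pmf (\<lambda>(x, l, t). ((x, t), l)) J) j - susp (map_pmf (\<lambda>(x, l, t). (x, l)) J) j)"
proof -
  have susp_X: "susp (map_pmf (\<lambda>(x, l, t). (x, l)) J) j = ereal (susp_X w Xs Ls Ts j)" if "j < n" for j
    using ign_pos[unfolded prob_map_X_L_ignorant] that by (intro susp_X_eq) blast
  show ?thesis
  proof (cases "ignorance_supported n w Xs Ls Ts")
    case True
    have "(\<Sum>j<n. susp (map_pmf (\<lambda>(x, l, t). ((x, t), l)) J) j - susp (map_pmf (\<lambda>(x, l, t). (x, l)) J) j)
        = ereal (\<Sum>j<n. susp_XT w Xs Ls Ts j - susp_X w Xs Ls Ts j)"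
      by (simp add: susp_X susp_XT_eq[OF True])
    then show ?thesis
      using slack[OF True] unfolding mutual_info_eq_info_XT leakage_slack_def by simp
  next
    case False
    then obtain j where "j < n" "susp (map_pmf (\<lambda>(x, l, t). ((x, t), l)) J) j = \<infinity>"
      using susp_XT_infinite by blast
    then have "(\<Sum>j<n. susp (map_pmf (\<lambda>(x, l, t). ((x, t), l)) J) j
        - susp (map_pmf (\<lambda>(x, l, t). (x, l)) J) j) = \<infinity>"
      using susp_X by (subst sum_Pinfty) force
    then show ?thesis by simp
  qed
qed

end

lemma map_joint_dist_secret_knowledge: "map_pmf (\<lambda>(x, l, t). (x, l)) (joint_dist \<mu> prot N) = \<mu>"
proof -
  have "map_pmf (\<lambda>(x, l, t). (x, l)) (joint_dist \<mu> prot N) = bind_pmf \<mu> return_pmf"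
    unfolding joint_dist_def map_bind_pmf by (intro bind_pmf_cong refl) (auto simp: map_pmf_comp)
  then show ?thesis by (simp add: bind_return_pmf')
qed

lemma pmf_joint_dist:
  "pmf (joint_dist \<mu> prot N) (x, l, t) = pmf \<mu> (x, l) * pmf (run_protocol prot N x l []) t"
proof -
  let ?f = "\<lambda>(x', l'). map_pmf (\<lambda>t. (x', l', t)) (run_protocol prot N x' l' [])"
  have "pmf (?f a) (x, l, t) = 0" if "a \<noteq> (x, l)" for a
    using that by (auto simp: pmf_eq_0_set_pmf split: prod.splits)
  then have "(LINT a|measure_pmf \<mu>. pmf (?f a) (x, l, t))
      = (\<Sum>a\<in>{(x, l)}. pmf \<mu> a *\<^sub>R pmf (?f a) (x, l, t))"
    by (intro integral_measure_pmf) auto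
  moreover have "pmf (?f (x, l)) (x, l, t) = pmf (run_protocol prot N x l []) t"
    using pmf_map_inj'[of "\<lambda>t. (x, l, t)" "run_protocol prot N x l []" t] by (simp add: inj_on_def)
  ultimately show ?thesis by (simp add: joint_dist_def pmf_bind)
qed

lemma set_pmf_joint_dist:
  "set_pmf (joint_dist \<mu> prot N)
    = (\<Union>(x, l)\<in>set_pmf \<mu>. (\<lambda>t. (x, l, t)) ` set_pmf (run_protocol prot N x l []))"
  by (auto simp: joint_dist_def set_bind_pmf)

lemma finite_joint_pmf_joint_dist:
  assumes fin_X: "finite (fst ` set_pmf \<mu>)" and len_L: "\<forall>(x, l) \<in> set_pmf \<mu>. length l = n"
    and fin_msgs: "\<forall>t i p0 px. prot t = Some (i, p0, px) \<longrightarrow>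
        finite (set_pmf p0) \<and> (\<forall>x. finite (set_pmf (px x)))"
  shows "finite_joint_pmf (joint_dist \<mu> prot N) (fst ` set_pmf \<mu>) (snd ` set_pmf \<mu>)
    (\<Union>(x, l)\<in>set_pmf \<mu>. set_pmf (run_protocol prot N x l []))"
proof
  have "snd ` set_pmf \<mu> \<subseteq> {l. set l \<subseteq> UNIV \<and> length l = n}" using len_L by auto
  then show finite_Ls: "finite (snd ` set_pmf \<mu>)"
    using finite_lists_length_eq[of "UNIV :: bool set" n] by (rule finite_subset) simp
  have "set_pmf \<mu> \<subseteq> fst ` set_pmf \<mu> \<times> snd ` set_pmf \<mu>" by force
  then have "finite (set_pmf \<mu>)" by (rule finite_subset) (use fin_X finite_Ls in simp)
  then show "finite (\<Union>(x, l)\<in>set_pmf \<mu>. set_pmf (run_protocol prot N x l []))"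
    using finite_set_pmf_run_protocol[OF fin_msgs] by (auto split: prod.splits)
  show "set_pmf (joint_dist \<mu> prot N) \<subseteq> fst ` set_pmf \<mu> \<times> snd ` set_pmf \<mu> \<times>
      (\<Union>(x, l)\<in>set_pmf \<mu>. set_pmf (run_protocol prot N x l []))"
    unfolding set_pmf_joint_dist by force
qed (rule fin_X)

theorem theorem3p4:
  fixes \<mu> :: "('x \<times> bool list) pmf" and n :: nat
    and prot :: "('x, 'm) protocol" and N :: nat
  assumes fin_X: "finite (fst ` set_pmf \<mu>)"
    and len_L: "\<forall>(x, l) \<in> set_pmf \<mu>. length l = n"
    and ign_pos: "\<forall>x \<in> fst ` set_pmf \<mu>. \<forall>i < n.
        measure_pmf.prob \<mu> {(x', l). x' = x \<and> \<not> l ! i} > 0"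
    and players: "\<forall>t i p0 px. prot t = Some (i, p0, px) \<longrightarrow> i < n"
    and fin_msgs: "\<forall>t i p0 px. prot t = Some (i, p0, px) \<longrightarrow>
        finite (set_pmf p0) \<and> (\<forall>x. finite (set_pmf (px x)))"
    and length_bound: "\<forall>t. N \<le> length t \<longrightarrow> prot t = None"
  shows "ereal (mutual_info (map_pmf (\<lambda>(x, l, t). (x, t)) (joint_dist \<mu> prot N)))
    \<le> (\<Sum>i<n. susp (map_pmf (\<lambda>(x, l, t). ((x, t), l)) (joint_dist \<mu> prot N)) i
              - susp (map_pmf (\<lambda>(x, l, t). (x, l)) (joint_dist \<mu> prot N)) i)"
proof -
  define Xs where "Xs = fst ` set_pmf \<mu>"
  define Ts where "Ts = (\<Union>(x, l)\<in>set_pmf \<mu>. set_pmf (run_protocol prot N x l []))"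
  interpret finite_joint_pmf "joint_dist \<mu> prot N" Xs "snd ` set_pmf \<mu>" Ts
    unfolding Xs_def Ts_def using fin_X len_L fin_msgs by (rule finite_joint_pmf_joint_dist)
  have weight: "w = (\<lambda>x l t. pmf \<mu> (x, l) * pmf (run_protocol prot N x l []) t)"
    by (simp add: fun_eq_iff pmf_joint_dist)
  show ?thesis
  proof (rule mutual_info_le_susp_sum)
    show "\<forall>x\<in>Xs. \<forall>j<n. 0 < measure_pmf.prob (map_pmf (\<lambda>(x, l, t). (x, l)) (joint_dist \<mu> prot N))
        {(x', l). x' = x \<and> \<not> l ! j}"
      using ign_pos unfolding map_joint_dist_secret_knowledge Xs_def .
    show "0 \<le> leakage_slack n w Xs (snd ` set_pmf \<mu>) Ts"
      if "ignorance_supported n w Xs (snd ` set_pmf \<mu>) Ts"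
      unfolding weight
    proof (rule leakage_slack_run_protocol_nonneg[OF players _ finite_Xs finite_Ts])
      show "\<forall>t i p0 px. prot t = Some (i, p0, px) \<longrightarrow> finite (set_pmf p0)" using fin_msgs by blast
      show "set_pmf (run_protocol prot N x l []) \<subseteq> Ts" if "pmf \<mu> (x, l) \<noteq> 0" for x l
        using that unfolding Ts_def set_pmf_iff[symmetric] by blast
    qed (use that weight in simp_all)
  qed
qed

end
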